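(* Let $n\ge1$, $m\ge0$, $\Phi(\mathbf t;\mathbf y)=\sum_{k=0}^m t_k p_{k+1}(\mathbf y)$, and let $\mathbf u(\mathbf t)=(u_1,\dots,u_n)$ be a $C^1$ map on an open set of parameters $\mathbf t=(t_0,\dots,t_m)$ such that $\frac{\partial\Phi}{\partial y_i}(\mathbf t;\mathbf u(\mathbf t))=0$ for $i=1,\dots,n$. Assume $\Phi_{i,j}:=\frac{\partial^2\Phi}{\partial y_i\partial y_j}(\mathbf t;\mathbf u(\mathbf t))\neq0$ for all $i,j\in\{1,\dots,n\}$ with $i+j>n$. Then for every $k=1,\dots,m$, \[ \frac{\partial \mathbf u}{\partial t_k}={\sf A}_k(\mathbf u)\,\frac{\partial \mathbf u}{\partial t_0}, \] where ${\sf A}_k(\mathbf u)$ is the upper triangular Toeplitz $n\times n$ matrix with entries $({\sf A}_k)_{i,j}=p_{k-j+i}(\mathbf u)$ for $i\le j$ and $({\sf A}_k)_{i,j}=0$ for $i>j$. In particular ${\sf A}_1$ is the Jordan block with $u_1$ on the diagonal and $1$ on the first superdiagonal.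
   Context: The elementary Schur polynomials $p_k(\mathbf y)$, $\mathbf y=(y_1,\dots,y_n)$, are defined by $\exp\big(\sum_{i=1}^n y_i z^i\big)=\sum_{k\ge 0}p_k(\mathbf y)z^k$, with the convention $p_k=0$ for $k<0$ (so $p_0=1$, $p_1=y_1$). *)

theory Defs
  imports "HOL-Analysis.Analysis" "HOL-Computational_Algebra.Formal_Power_Series"
begin

definition schur_p :: "nat \<Rightarrow> int \<Rightarrow> (nat \<Rightarrow> real) \<Rightarrow> real" where
  "schur_p n k y = (if k < 0 then 0 else
     fps_nth (fps_exp 1 oo Abs_fps (\<lambda>i. if 1 \<le> i \<and> i \<le> n then y i else 0)) (nat k))"

definition pdy :: "((nat \<Rightarrow> real) \<Rightarrow> real) \<Rightarrow> nat \<Rightarrow> (nat \<Rightarrow> real) \<Rightarrow> real" where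
  "pdy f i y = deriv (\<lambda>s. f (y(i := y i + s))) 0"

text \<open>Phi(t;y) = sum_{k=0}^m t_k p_{k+1}(y); the parameter vector t lives in real^'p,
  whose coordinates are labelled t_0..t_m via the bijection e :: nat => 'p.\<close>
definition Phi :: "nat \<Rightarrow> nat \<Rightarrow> (nat \<Rightarrow> 'p::finite) \<Rightarrow> real^'p \<Rightarrow> (nat \<Rightarrow> real) \<Rightarrow> real" where
  "Phi n m e t y = (\<Sum>k=0..m. t $ (e k) * schur_p n (int k + 1) y)"

definition toeplitzA :: "nat \<Rightarrow> nat \<Rightarrow> (nat \<Rightarrow> real) \<Rightarrow> nat \<Rightarrow> nat \<Rightarrow> real" where
  "toeplitzA n k y i j = (if i \<le> j then schur_p n (int k - int j + int i) y else 0)"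

end

theory Submission
  imports Defs
begin

text \<open>Writing \<open>E = exp Y\<close> with \<open>Y = \<Sum>i. y\<^sub>i z\<^sup>i\<close>, the identity \<open>z E' = (z Y') E\<close> gives the
  recurrence \<open>k p\<^sub>k = \<Sum>i. i y\<^sub>i p\<^sub>k\<^sub>-\<^sub>i\<close>, and from it by induction
  \<open>\<partial>p\<^sub>k/\<partial>y\<^sub>i = p\<^sub>k\<^sub>-\<^sub>i\<close>. Hence, with \<open>F(s) = \<Sum>q. t\<^sub>q p\<^sub>q\<^sub>+\<^sub>1\<^sub>-\<^sub>s(u)\<close>,
  the critical point equations read \<open>F(1) = \<dots> = F(n) = 0\<close> and the Hessian is the Hankel matrix
  \<open>H = (F(i+j))\<close>, which is anti-triangular with antidiagonal \<open>F(n+1) \<noteq> 0\<close>, hence invertible.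
  Differentiating \<open>F(i) = 0\<close> along \<open>t\<^sub>k\<close> gives \<open>H \<partial>u/\<partial>t\<^sub>k = -(p\<^sub>k\<^sub>+\<^sub>1\<^sub>-\<^sub>i)\<^sub>i\<close>,
  in particular \<open>H \<partial>u/\<partial>t\<^sub>0 = -e\<^sub>1\<close>. Row \<open>i\<close> of \<open>H A\<^sub>k\<close> is
  \<open>\<Sum>d<i. p\<^sub>k\<^sub>-\<^sub>d\<close> times row \<open>i-d\<close> of \<open>H\<close>, so \<open>A\<^sub>k \<partial>u/\<partial>t\<^sub>0\<close> solves the same
  system as \<open>\<partial>u/\<partial>t\<^sub>k\<close>, and the two agree by invertibility of \<open>H\<close>.\<close>

definition schur_exponent :: "nat \<Rightarrow> (nat \<Rightarrow> real) \<Rightarrow> real fps" where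
  "schur_exponent n y = Abs_fps (\<lambda>i. if 1 \<le> i \<and> i \<le> n then y i else 0)"

lemma schur_p_nat: "schur_p n (int k) y = fps_nth (fps_exp 1 oo schur_exponent n y) k"
  by (simp add: schur_p_def schur_exponent_def)

lemma schur_p_neg: "k < 0 \<Longrightarrow> schur_p n k y = 0"
  by (simp add: schur_p_def)

lemma schur_p_0 [simp]: "schur_p n 0 y = 1"
  using schur_p_nat[of n 0 y] by simp

lemma schur_p_recurrence_nat:
  "real k * schur_p n (int k) y = (\<Sum>i=1..n. real i * y i * schur_p n (int k - int i) y)"
proof -
  define Y where "Y = schur_exponent n y"
  define E where "E = fps_exp (1::real) oo Y"
  define g where "g i = real i * fps_nth Y i * schur_p n (int k - int i) y" for i
  have "fps_deriv E = E * fps_deriv Y"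
    unfolding E_def by (simp add: fps_compose_deriv Y_def schur_exponent_def)
  moreover have X_deriv: "fps_nth (fps_X * fps_deriv f) i = real i * fps_nth f i" for f :: "real fps" and i
    by (cases i) (simp_all add: fps_X_mult_nth fps_deriv_nth)
  ultimately have "real k * fps_nth E k = fps_nth ((fps_X * fps_deriv Y) * E) k"
    by (metis X_deriv mult.assoc mult.commute)
  also have "\<dots> = (\<Sum>i=0..k. real i * fps_nth Y i * fps_nth E (k - i))"
    by (subst fps_mult_nth) (simp only: X_deriv)
  also have "\<dots> = (\<Sum>i=0..k. g i)"
  proof (intro sum.cong refl)
    fix i assume "i \<in> {0..k}"
    then have "int k - int i = int (k - i)" by simp
    then show "real i * fps_nth Y i * fps_nth E (k - i) = g i"
      unfolding g_def E_def Y_def by (simp only: schur_p_nat)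
  qed
  also have "\<dots> = sum g ({0..k} \<union> {1..n})"
    by (intro sum.mono_neutral_left) (auto simp: g_def schur_p_neg)
  also have "\<dots> = sum g {1..n}"
    by (intro sum.mono_neutral_right) (auto simp: g_def Y_def schur_exponent_def)
  also have "\<dots> = (\<Sum>i=1..n. real i * y i * schur_p n (int k - int i) y)"
    by (intro sum.cong refl) (simp add: g_def Y_def schur_exponent_def)
  finally show ?thesis
    by (simp only: E_def Y_def schur_p_nat)
qed

lemma schur_p_recurrence:
  "of_int k * schur_p n k y = (\<Sum>i=1..n. real i * y i * schur_p n (k - int i) y)"
proof (cases "k < 0")
  case True
  then show ?thesis by (simp add: schur_p_neg)
next
  case False
  then obtain k' where "k = int k'" by (metis nonneg_int_cases not_less)
  then show ?thesis using schur_p_recurrence_nat[of k' n y] by simp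
qed

lemma schur_p_eq_recurrence:
  "k \<noteq> 0 \<Longrightarrow> schur_p n k y = (1 / of_int k) * (\<Sum>i=1..n. real i * y i * schur_p n (k - int i) y)"
  using schur_p_recurrence[of k n y] by (simp add: field_simps)

lemma schur_p_derivative_identity:
  "(\<Sum>i=1..n. real i * y i * (\<Sum>j=1..n. schur_p n (k - int i - int j) y * c j))
     + (\<Sum>j=1..n. real j * c j * schur_p n (k - int j) y)
   = of_int k * (\<Sum>j=1..n. schur_p n (k - int j) y * c j)"
proof -
  have "(\<Sum>i=1..n. real i * y i * (\<Sum>j=1..n. schur_p n (k - int i - int j) y * c j))
      = (\<Sum>i=1..n. \<Sum>j=1..n. real i * y i * schur_p n (k - int j - int i) y * c j)"
    by (simp add: sum_distrib_left mult_ac diff_diff_eq add.commute)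
  also have "\<dots> = (\<Sum>j=1..n. (\<Sum>i=1..n. real i * y i * schur_p n (k - int j - int i) y) * c j)"
    by (subst sum.swap) (simp add: sum_distrib_right)
  also have "\<dots> = (\<Sum>j=1..n. of_int (k - int j) * schur_p n (k - int j) y * c j)"
    by (simp only: schur_p_recurrence)
  finally show ?thesis
    by (simp add: sum_distrib_left sum.distrib[symmetric] algebra_simps)
qed

lemma schur_p_has_derivative:
  fixes y :: "'a::real_normed_vector \<Rightarrow> nat \<Rightarrow> real"
  assumes dy: "\<And>i. i \<in> {1..n} \<Longrightarrow> ((\<lambda>x. y x i) has_derivative Dy i) (at a within S)"
  shows "((\<lambda>x. schur_p n k (y x)) has_derivative
           (\<lambda>h. \<Sum>j=1..n. schur_p n (k - int j) (y a) * Dy j h)) (at a within S)"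
proof (induction "nat k" arbitrary: k rule: less_induct)
  case less
  show ?case
  proof (cases "k \<ge> 1")
    case False
    then have "(\<lambda>x. schur_p n k (y x)) = (\<lambda>x. if k = 0 then 1 else 0)"
      and "(\<lambda>h. \<Sum>j=1..n. schur_p n (k - int j) (y a) * Dy j h) = (\<lambda>h. 0)"
      by (auto simp: schur_p_neg intro!: sum.neutral)
    then show ?thesis by simp
  next
    case True
    have IH: "((\<lambda>x. schur_p n (k - int i) (y x)) has_derivative
           (\<lambda>h. \<Sum>j=1..n. schur_p n (k - int i - int j) (y a) * Dy j h)) (at a within S)"
      if "i \<in> {1..n}" for i
      using less[of "k - int i"] that True by auto
    have "(\<lambda>x. schur_p n k (y x)) =
       (\<lambda>x. (1 / of_int k) * (\<Sum>i=1..n. real i * y x i * schur_p n (k - int i) (y x)))"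
      using True by (intro ext schur_p_eq_recurrence) simp
    moreover have "((\<lambda>x. (1 / of_int k) * (\<Sum>i=1..n. real i * y x i * schur_p n (k - int i) (y x)))
       has_derivative (\<lambda>h. (1 / of_int k) * (\<Sum>i=1..n. real i * y a i *
            (\<Sum>j=1..n. schur_p n (k - int i - int j) (y a) * Dy j h)
            + real i * Dy i h * schur_p n (k - int i) (y a)))) (at a within S)"
      by (intro has_derivative_mult_right has_derivative_sum has_derivative_mult
          has_derivative_const IH dy) auto
    moreover have "(\<lambda>h. (1 / of_int k) * (\<Sum>i=1..n. real i * y a i *
            (\<Sum>j=1..n. schur_p n (k - int i - int j) (y a) * Dy j h)
            + real i * Dy i h * schur_p n (k - int i) (y a)))
        = (\<lambda>h. \<Sum>j=1..n. schur_p n (k - int j) (y a) * Dy j h)"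
      using True by (simp only: sum.distrib schur_p_derivative_identity) simp
    ultimately show ?thesis by simp
  qed
qed

lemma schur_p_has_real_derivative_coordinate:
  assumes "i \<in> {1..n}"
  shows "((\<lambda>s. schur_p n k (y(i := y i + s))) has_real_derivative schur_p n (k - int i) y) (at 0)"
proof -
  have "((\<lambda>s. (y(i := y i + s)) j) has_derivative (\<lambda>h. if j = i then h else 0)) (at 0)" for j
    by (cases "j = i") (auto intro!: derivative_eq_intros)
  from schur_p_has_derivative[where y="\<lambda>s. y(i := y i + s)" and a=0 and S=UNIV, OF this]
  have "((\<lambda>s. schur_p n k (y(i := y i + s))) has_derivative
      (\<lambda>h. \<Sum>j=1..n. schur_p n (k - int j) y * (if j = i then h else 0))) (at 0)"
    by simp
  moreover have "(\<Sum>j=1..n. schur_p n (k - int j) y * (if j = i then h else 0))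
      = schur_p n (k - int i) y * h" for h
  proof -
    have "(\<Sum>j=1..n. schur_p n (k - int j) y * (if j = i then h else 0))
        = (\<Sum>j=1..n. if j = i then schur_p n (k - int i) y * h else 0)"
      by (intro sum.cong) auto
    then show ?thesis using assms by simp
  qed
  ultimately show ?thesis
    by (simp add: has_field_derivative_def mult_commute_abs)
qed

lemma pdy_schur_combination:
  assumes "i \<in> {1..n}"
  shows "pdy (\<lambda>y. \<Sum>q\<in>Q. c q * schur_p n (a q) y) i y = (\<Sum>q\<in>Q. c q * schur_p n (a q - int i) y)"
  unfolding pdy_def
  by (intro DERIV_imp_deriv DERIV_sum DERIV_cmult schur_p_has_real_derivative_coordinate assms)

definition Phi_shifted :: "nat \<Rightarrow> nat \<Rightarrow> (nat \<Rightarrow> 'p::finite) \<Rightarrow> real^'p \<Rightarrow> (nat \<Rightarrow> real) \<Rightarrow> int \<Rightarrow> real" where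
  "Phi_shifted n m e t y s = (\<Sum>q=0..m. t $ e q * schur_p n (int q + 1 - s) y)"

lemma pdy_Phi: "i \<in> {1..n} \<Longrightarrow> pdy (Phi n m e t) i y = Phi_shifted n m e t y (int i)"
  using pdy_schur_combination[of i n "\<lambda>q. t $ e q" "\<lambda>q. int q + 1"]
  by (simp add: Phi_def[abs_def] Phi_shifted_def)

lemma pdy_pdy_Phi:
  assumes "i \<in> {1..n}" "j \<in> {1..n}"
  shows "pdy (\<lambda>y. pdy (Phi n m e t) j y) i y = Phi_shifted n m e t y (int i + int j)"
  using pdy_schur_combination[of i n "\<lambda>q. t $ e q" "\<lambda>q. int q + 1 - int j"] assms
  by (simp add: pdy_Phi Phi_shifted_def algebra_simps)

lemma Phi_shifted_eq_0_if_critical: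
  assumes "\<forall>i\<in>{1..n}. pdy (Phi n m e t) i y = 0" "1 \<le> s" "s \<le> int n"
  shows "Phi_shifted n m e t y s = 0"
proof -
  have "nat s \<in> {1..n}" "int (nat s) = s" using assms(2,3) by auto
  then show ?thesis using assms(1) pdy_Phi by metis
qed

lemma Phi_shifted_has_derivative:
  fixes u :: "real^'p::finite \<Rightarrow> nat \<Rightarrow> real"
  assumes du: "\<And>j. j \<in> {1..n} \<Longrightarrow> ((\<lambda>t. u t j) has_derivative Du j) (at t)"
  shows "((\<lambda>t. Phi_shifted n m e t (u t) s) has_derivative
           (\<lambda>h. (\<Sum>q=0..m. h $ e q * schur_p n (int q + 1 - s) (u t))
              + (\<Sum>j=1..n. Phi_shifted n m e t (u t) (s + int j) * Du j h))) (at t)"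
proof -
  have "((\<lambda>t. Phi_shifted n m e t (u t) s) has_derivative
           (\<lambda>h. \<Sum>q=0..m. t $ e q * (\<Sum>j=1..n. schur_p n (int q + 1 - s - int j) (u t) * Du j h)
              + h $ e q * schur_p n (int q + 1 - s) (u t))) (at t)"
    unfolding Phi_shifted_def
    by (intro has_derivative_sum has_derivative_mult schur_p_has_derivative du
        bounded_linear_imp_has_derivative bounded_linear_vec_nth)
  moreover have "(\<Sum>q=0..m. t $ e q * (\<Sum>j=1..n. schur_p n (int q + 1 - s - int j) (u t) * Du j h))
      = (\<Sum>j=1..n. Phi_shifted n m e t (u t) (s + int j) * Du j h)" for h
  proof -
    have "(\<Sum>q=0..m. t $ e q * (\<Sum>j=1..n. schur_p n (int q + 1 - s - int j) (u t) * Du j h))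
        = (\<Sum>q=0..m. \<Sum>j=1..n. t $ e q * schur_p n (int q + 1 - (s + int j)) (u t) * Du j h)"
      by (simp add: sum_distrib_left diff_diff_eq mult.assoc)
    also have "\<dots> = (\<Sum>j=1..n. \<Sum>q=0..m. t $ e q * schur_p n (int q + 1 - (s + int j)) (u t) * Du j h)"
      by (rule sum.swap)
    finally show ?thesis
      by (simp add: Phi_shifted_def sum_distrib_right)
  qed
  ultimately show ?thesis by (simp only: sum.distrib add.commute)
qed

lemma Phi_shifted_critical_derivative:
  fixes u :: "real^'p::finite \<Rightarrow> nat \<Rightarrow> real"
  assumes "inj_on e {..m}" "kk \<le> m" "open U" "t \<in> U"
    and du: "\<And>j. j \<in> {1..n} \<Longrightarrow> ((\<lambda>t. u t j) has_derivative Du j) (at t)"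
    and crit: "\<And>t. t \<in> U \<Longrightarrow> Phi_shifted n m e t (u t) s = 0"
  shows "schur_p n (int kk + 1 - s) (u t)
     + (\<Sum>j=1..n. Phi_shifted n m e t (u t) (s + int j) * Du j (axis (e kk) 1)) = 0"
proof -
  have "((\<lambda>t. Phi_shifted n m e t (u t) s) has_derivative (\<lambda>h. 0)) (at t)"
    by (rule has_derivative_transform_within_open[OF _ \<open>open U\<close> \<open>t \<in> U\<close>])
      (simp_all add: crit)
  from fun_cong[OF has_derivative_unique[OF Phi_shifted_has_derivative[OF du] this], of "axis (e kk) 1"]
  have "(\<Sum>q=0..m. axis (e kk) 1 $ e q * schur_p n (int q + 1 - s) (u t))
      + (\<Sum>j=1..n. Phi_shifted n m e t (u t) (s + int j) * Du j (axis (e kk) 1)) = 0"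
    by blast
  moreover have "(\<Sum>q=0..m. axis (e kk) 1 $ e q * schur_p n (int q + 1 - s) (u t))
      = (\<Sum>q=0..m. if q = kk then schur_p n (int kk + 1 - s) (u t) else 0)"
    using assms(1,2) by (intro sum.cong) (auto simp: axis_def inj_on_def)
  ultimately show ?thesis
    using assms(2) by simp
qed

lemma toeplitzA_eq:
  "toeplitzA n k y i j = (if i \<le> j then schur_p n (int k + (int i - int j)) y else 0)"
  unfolding toeplitzA_def by (simp only: add_diff_eq diff_add_eq add.commute)

lemma anti_triangular_hankel_kernel:
  fixes F :: "int \<Rightarrow> real" and x :: "nat \<Rightarrow> real"
  assumes Fz: "\<And>s. 1 \<le> s \<Longrightarrow> s \<le> int n \<Longrightarrow> F s = 0" and Fn: "F (int n + 1) \<noteq> 0"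
    and hx: "\<And>i. i \<in> {1..n} \<Longrightarrow> (\<Sum>j=1..n. F (int i + int j) * x j) = 0"
  shows "j \<in> {1..n} \<Longrightarrow> x j = 0"
proof (induction "n - j" arbitrary: j rule: less_induct)
  case less
  have row: "n + 1 - j \<in> {1..n}" using less.prems by auto
  have "(\<Sum>j'=1..n. F (int (n + 1 - j) + int j') * x j')
      = (\<Sum>j'=1..n. if j' = j then F (int n + 1) * x j else 0)"
  proof (rule sum.cong[OF refl])
    fix j' assume j': "j' \<in> {1..n}"
    consider "j' < j" | "j' = j" | "j < j'" by linarith
    then show "F (int (n + 1 - j) + int j') * x j' = (if j' = j then F (int n + 1) * x j else 0)"
    proof cases
      case 1
      then show ?thesis using less.prems j' by (auto intro!: Fz)
    next
      case 2
      then show ?thesis using less.prems by (simp add: of_nat_diff add.commute)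
    next
      case 3
      then show ?thesis using less.prems j' less.hyps[of j'] by auto
    qed
  qed
  then have "F (int n + 1) * x j = 0"
    using hx[OF row] less.prems by simp
  with Fn show ?case by simp
qed

lemma hankel_upper_toeplitz_reindex:
  fixes F c :: "int \<Rightarrow> real"
  assumes "l \<in> {1..n}"
  shows "(\<Sum>j=1..n. F (int i + int j) * (if j \<le> l then c (int j - int l) else 0))
       = (\<Sum>d<l. F (int i + int l - int d) * c (- int d))"
proof -
  have "(\<Sum>j=1..n. F (int i + int j) * (if j \<le> l then c (int j - int l) else 0))
      = (\<Sum>j=1..l. F (int i + int j) * c (int j - int l))"
    using assms by (intro sum.mono_neutral_cong_right) auto
  also have "\<dots> = (\<Sum>d<l. F (int i + int l - int d) * c (- int d))"
    by (rule sum.reindex_bij_witness[of _ "\<lambda>d. l - d" "\<lambda>j. l - j"]) (auto simp: of_nat_diff)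
  finally show ?thesis .
qed

lemma hankel_upper_toeplitz_entry:
  fixes F c :: "int \<Rightarrow> real"
  assumes Fz: "\<And>s. 1 \<le> s \<Longrightarrow> s \<le> int n \<Longrightarrow> F s = 0"
    and i: "i \<in> {1..n}" and l: "l \<in> {1..n}"
  shows "(\<Sum>j=1..n. F (int i + int j) * (if j \<le> l then c (int j - int l) else 0))
       = (\<Sum>d<i. c (- int d) * F (int (i - d) + int l))"
proof -
  have vanish: "F (int i + int l - int d) = 0" if "min i l \<le> d" "d < max i l" for d
    using that i l by (intro Fz) auto
  have "(\<Sum>j=1..n. F (int i + int j) * (if j \<le> l then c (int j - int l) else 0))
      = (\<Sum>d<l. F (int i + int l - int d) * c (- int d))"
    using l by (rule hankel_upper_toeplitz_reindex)
  also have "\<dots> = (\<Sum>d<min i l. F (int i + int l - int d) * c (- int d))"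
    by (intro sum.mono_neutral_right) (auto simp: vanish)
  also have "\<dots> = (\<Sum>d<i. F (int i + int l - int d) * c (- int d))"
    by (intro sum.mono_neutral_left) (auto simp: vanish)
  also have "\<dots> = (\<Sum>d<i. c (- int d) * F (int (i - d) + int l))"
    by (intro sum.cong refl) (simp add: of_nat_diff algebra_simps)
  finally show ?thesis .
qed

text \<open>By the previous lemma, row \<open>i\<close> of the Hankel matrix times the Toeplitz matrix is
  \<open>\<Sum>d<i. c(-d)\<close> times row \<open>i - d\<close> of the Hankel matrix; applied to \<open>v\<close> only \<open>d = i - 1\<close> survives.\<close>

lemma hankel_upper_toeplitz_product:
  fixes F c :: "int \<Rightarrow> real" and v :: "nat \<Rightarrow> real"
  assumes Fz: "\<And>s. 1 \<le> s \<Longrightarrow> s \<le> int n \<Longrightarrow> F s = 0"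
    and hv: "\<And>i. i \<in> {1..n} \<Longrightarrow> (if i = 1 then 1 else 0) + (\<Sum>j=1..n. F (int i + int j) * v j) = 0"
    and i: "i \<in> {1..n}"
  shows "c (1 - int i)
    + (\<Sum>j=1..n. F (int i + int j) * (\<Sum>l=1..n. (if j \<le> l then c (int j - int l) else 0) * v l)) = 0"
proof -
  have "(\<Sum>j=1..n. F (int i + int j) * (\<Sum>l=1..n. (if j \<le> l then c (int j - int l) else 0) * v l))
      = (\<Sum>l=1..n. (\<Sum>j=1..n. F (int i + int j) * (if j \<le> l then c (int j - int l) else 0)) * v l)"
    by (simp add: sum_distrib_left sum_distrib_right mult_ac) (rule sum.swap)
  also have "\<dots> = (\<Sum>l=1..n. (\<Sum>d<i. c (- int d) * F (int (i - d) + int l)) * v l)"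
    by (intro sum.cong refl arg_cong[where f = "\<lambda>x. x * _"] hankel_upper_toeplitz_entry[OF Fz i]) simp
  also have "\<dots> = (\<Sum>d<i. c (- int d) * (\<Sum>l=1..n. F (int (i - d) + int l) * v l))"
    by (simp add: sum_distrib_left sum_distrib_right mult.assoc) (rule sum.swap)
  also have "\<dots> = (\<Sum>d<i. if d = i - 1 then - c (1 - int i) else 0)"
  proof (rule sum.cong[OF refl])
    fix d assume d: "d \<in> {..<i}"
    then have "i - d \<in> {1..n}" using i by auto
    then have "(\<Sum>l=1..n. F (int (i - d) + int l) * v l) = - (if i - d = 1 then 1 else 0)"
      using hv by fastforce
    then show "c (- int d) * (\<Sum>l=1..n. F (int (i - d) + int l) * v l)
        = (if d = i - 1 then - c (1 - int i) else 0)"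
      using d by (cases "d = i - 1") (auto simp: of_nat_diff)
  qed
  also have "\<dots> = - c (1 - int i)"
    using i by simp
  finally show ?thesis by simp
qed

lemma hankel_upper_toeplitz_solution:
  fixes F c :: "int \<Rightarrow> real" and v w :: "nat \<Rightarrow> real"
  assumes Fz: "\<And>s. 1 \<le> s \<Longrightarrow> s \<le> int n \<Longrightarrow> F s = 0" and Fn: "F (int n + 1) \<noteq> 0"
    and hv: "\<And>i. i \<in> {1..n} \<Longrightarrow> (if i = 1 then 1 else 0) + (\<Sum>j=1..n. F (int i + int j) * v j) = 0"
    and hw: "\<And>i. i \<in> {1..n} \<Longrightarrow> c (1 - int i) + (\<Sum>j=1..n. F (int i + int j) * w j) = 0"
    and i: "i \<in> {1..n}"
  shows "w i = (\<Sum>j=1..n. (if i \<le> j then c (int i - int j) else 0) * v j)"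
proof -
  define x where "x j = w j - (\<Sum>l=1..n. (if j \<le> l then c (int j - int l) else 0) * v l)" for j
  have "(\<Sum>j=1..n. F (int i' + int j) * x j) = 0" if "i' \<in> {1..n}" for i'
    using hw[OF that] hankel_upper_toeplitz_product[OF Fz hv that, of c]
    by (simp add: x_def right_diff_distrib sum_subtractf)
  from anti_triangular_hankel_kernel[OF Fz Fn this i] show ?thesis
    by (simp add: x_def)
qed

theorem mainTheorem3:
  fixes n m :: nat
    and e :: "nat \<Rightarrow> 'p::finite"
    and U :: "(real^'p) set"
    and u :: "real^'p \<Rightarrow> nat \<Rightarrow> real"
    and D :: "nat \<Rightarrow> real^'p \<Rightarrow> ((real^'p) \<Rightarrow>\<^sub>L real)"
  assumes "n \<ge> 1"
    and "bij_betw e {..m} UNIV"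
    and "open U"
    and C1: "\<forall>i\<in>{1..n}. (\<forall>t\<in>U. ((\<lambda>t. u t i) has_derivative blinfun_apply (D i t)) (at t))
                         \<and> continuous_on U (D i)"
    and crit: "\<forall>t\<in>U. \<forall>i\<in>{1..n}. pdy (Phi n m e t) i (u t) = 0"
    and nondeg: "\<forall>t\<in>U. \<forall>i\<in>{1..n}. \<forall>j\<in>{1..n}. i + j > n \<longrightarrow>
                   pdy (\<lambda>y. pdy (Phi n m e t) j y) i (u t) \<noteq> 0"
  shows "\<forall>k\<in>{1..m}. \<forall>t\<in>U. \<forall>i\<in>{1..n}.
           D i t (axis (e k) 1) = (\<Sum>j=1..n. toeplitzA n k (u t) i j * D j t (axis (e 0) 1))"
proof (intro ballI)
  fix k t i assume k: "k \<in> {1..m}" and t: "t \<in> U" and i: "i \<in> {1..n}"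
  define F where "F s = Phi_shifted n m e t (u t) s" for s
  \<comment> \<open>only differentiability is needed\<close>
  have du: "\<And>j. j \<in> {1..n} \<Longrightarrow> ((\<lambda>t. u t j) has_derivative D j t) (at t)"
    using C1 t by blast
  have crit_shifted: "\<And>t. t \<in> U \<Longrightarrow> Phi_shifted n m e t (u t) (int r) = 0" if "r \<in> {1..n}" for r
    using crit that by (auto intro: Phi_shifted_eq_0_if_critical)
  have system: "schur_p n (int kk + (1 - int r)) (u t)
      + (\<Sum>j=1..n. F (int r + int j) * D j t (axis (e kk) 1)) = 0" if "r \<in> {1..n}" "kk \<le> m" for r kk
    using Phi_shifted_critical_derivative[OF _ that(2) \<open>open U\<close> t du crit_shifted[OF that(1)]] assms(2)
    by (simp add: F_def bij_betw_def add_diff_eq)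
  have "F s = 0" if "1 \<le> s" "s \<le> int n" for s
    using crit t that by (simp add: F_def Phi_shifted_eq_0_if_critical)
  moreover have "F (int n + 1) \<noteq> 0"
    using bspec[OF nondeg t] assms(1) pdy_pdy_Phi[of 1 n n m e t "u t"] by (auto simp: F_def add.commute)
  moreover have "(if r = 1 then 1 else 0) + (\<Sum>j=1..n. F (int r + int j) * D j t (axis (e 0) 1)) = 0"
    if "r \<in> {1..n}" for r
    using system[OF that, of 0] that by (auto simp: schur_p_neg)
  moreover note system[of _ k]
  ultimately show "D i t (axis (e k) 1) = (\<Sum>j=1..n. toeplitzA n k (u t) i j * D j t (axis (e 0) 1))"
    unfolding toeplitzA_eq
    by (rule hankel_upper_toeplitz_solution[where c = "\<lambda>s. schur_p n (int k + s) (u t)"])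
      (use i k in auto)
qed

end
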